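(* Let $p$ be an odd prime, $G=\mathrm{PGL}_n(\mathbb{C})$ where $p^s\mid n$, $p^{s+1}\nmid n$, $s\ge1$. Let $\bar A$ be a toral elementary abelian $p$-subgroup of $G$ of rank $r$ with $1\le r\le s$. If $C_G(\bar A)$ is connected, then $\bar A$ contains an element of order $p$ not $G$-conjugate to $e_{n/p}$.
   Context: Toral: contained in a maximal torus. With $\alpha=e^{2\pi i/p}$ and $n=pk$, $e_{n/p}$ is the image in $G$ of $\mathrm{diag}(I_k,\alpha I_k,\dots,\alpha^{p-1}I_k)$. *)

theory Defs
  imports "HOL-Analysis.Analysis" "HOL-Algebra.Multiplicative_Group"
begin

text \<open>PGL_n(C) with n = CARD('n): elements are classes of invertible matrices modulo
  nonzero scalars; the group law multiplies representatives.\<close>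

definition pcls :: "complex^'n^'n \<Rightarrow> (complex^'n^'n) set" where
  "pcls M = {(\<chi> i j. c * M $ i $ j) | c. c \<noteq> 0}"

definition PGL :: "(complex^'n::finite^'n) set monoid" where
  "PGL = \<lparr> carrier = {pcls M | M. invertible M},
           mult = (\<lambda>X Y. {A ** B | A B. A \<in> X \<and> B \<in> Y}),
           one = pcls (mat 1) \<rparr>"

definition PGL_top :: "(complex^'n::finite^'n) set topology" where
  "PGL_top = topology (\<lambda>U. U \<subseteq> carrier PGL \<and>
       open {M. invertible M \<and> pcls M \<in> U})"

definition diag_mat :: "('n \<Rightarrow> complex) \<Rightarrow> complex^'n^'n" where
  "diag_mat d = (\<chi> i j. if i = j then d i else 0)"

text \<open>The image of the diagonal torus; the maximal tori are exactly its conjugates.\<close>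

definition diag_torus :: "(complex^'n::finite^'n) set set" where
  "diag_torus = {pcls (diag_mat d) | d. \<forall>i. d i \<noteq> 0}"

definition maximal_torus :: "(complex^'n::finite^'n) set set \<Rightarrow> bool" where
  "maximal_torus T \<longleftrightarrow> (\<exists>g \<in> carrier PGL.
      T = (\<lambda>t. g \<otimes>\<^bsub>PGL\<^esub> t \<otimes>\<^bsub>PGL\<^esub> inv\<^bsub>PGL\<^esub> g) ` diag_torus)"

definition toral :: "(complex^'n::finite^'n) set set \<Rightarrow> bool" where
  "toral A \<longleftrightarrow> (\<exists>T. maximal_torus T \<and> A \<subseteq> T)"

definition pgl_centralizer :: "(complex^'n::finite^'n) set set \<Rightarrow> (complex^'n^'n) set set" where
  "pgl_centralizer A = {g \<in> carrier PGL. \<forall>a \<in> A. g \<otimes>\<^bsub>PGL\<^esub> a = a \<otimes>\<^bsub>PGL\<^esub> g}"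

definition elem_abelian_p_subgroup :: "nat \<Rightarrow> nat \<Rightarrow> (complex^'n::finite^'n) set set \<Rightarrow> bool" where
  "elem_abelian_p_subgroup p r A \<longleftrightarrow> subgroup A PGL
     \<and> (\<forall>x \<in> A. \<forall>y \<in> A. x \<otimes>\<^bsub>PGL\<^esub> y = y \<otimes>\<^bsub>PGL\<^esub> x)
     \<and> (\<forall>x \<in> A. x [^]\<^bsub>PGL\<^esub> p = \<one>\<^bsub>PGL\<^esub>)
     \<and> finite A \<and> card A = p ^ r"

text \<open>A fixed enumeration of the index type, used to order the basis.\<close>

definition idx :: "'n::finite \<Rightarrow> nat" where
  "idx = (SOME f. bij_betw f (UNIV::'n set) {..<CARD('n)})"

text \<open>e_{n/p}: image of diag(I_k, alpha I_k, ..., alpha^(p-1) I_k), n = p k, alpha = e^(2 pi i/p).\<close>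

definition e_elt :: "nat \<Rightarrow> (complex^'n::finite^'n) set" where
  "e_elt p = pcls (diag_mat (\<lambda>i::'n.
      exp (2 * of_real pi * \<i> / of_nat p) ^ (idx i div (CARD('n) div p))))"

end

theory Submission
  imports Defs
begin

text \<open>Suppose every element of order \<open>p\<close> of \<open>A\<close> were conjugate to \<open>e\<^sub>n\<^sub>/\<^sub>p\<close>. As
  \<open>e\<^sub>n\<^sub>/\<^sub>p\<close> is traceless (its eigenvalues are all \<open>p\<close>-th roots of unity, each with
  multiplicity \<open>n/p\<close>), every nontrivial element of \<open>A\<close> would have traceless lifts. Diagonalise
  the toral group \<open>A\<close> simultaneously: the \<open>n\<close> diagonal entries, suitably normalised, are
  characters \<open>\<chi>\<^sub>1, \<dots>, \<chi>\<^sub>n\<close> of \<open>A\<close> (the weights) with \<open>\<Sum>\<^sub>k \<chi>\<^sub>k(x) = 0\<close> for \<open>x \<noteq> 1\<close>.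
  By orthogonality of characters every character of \<open>A\<close> then occurs exactly \<open>n/|A|\<close> times
  among the weights, so multiplication by a weight \<open>\<chi>\<^sub>j\<close> permutes them. The corresponding
  permutation matrix \<open>P\<close> centralises \<open>A\<close> in \<open>PGL\<^sub>n\<close>, while \<open>P X = \<chi>\<^sub>j(x) X P\<close> for the lift
  \<open>X\<close> of any \<open>x \<in> A\<close>. For an element of the centraliser of \<open>x\<close> the scalar relating
  \<open>M X\<close> and \<open>X M\<close> ranges over the finitely many eigenvalue ratios of \<open>X\<close>; choosing \<open>x\<close> and
  \<open>j\<close> with \<open>\<chi>\<^sub>j(x) \<noteq> 1\<close>, whether this scalar equals \<open>1\<close> splits \<open>C\<^sub>G(A)\<close> into two
  nonempty open pieces.\<close>

section \<open>Scalar multiples, conjugates and diagonal matrices\<close>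

definition smul :: "complex \<Rightarrow> complex^'n^'m \<Rightarrow> complex^'n^'m" where
  "smul c M = (\<chi> i j. c * M $ i $ j)"

lemma smul_nth [simp]: "smul c M $ i $ j = c * M $ i $ j"
  by (simp add: smul_def)

lemma smul_smul [simp]: "smul c (smul d M) = smul (c * d) M"
  by (simp add: vec_eq_iff mult.assoc)

lemma smul_one [simp]: "smul 1 M = M"
  by (simp add: vec_eq_iff)

lemma smul_matrix_mul: "smul c A ** B = smul c (A ** B)"
  by (simp add: vec_eq_iff matrix_matrix_mult_def sum_distrib_left mult.assoc)

lemma matrix_mul_smul: "A ** smul c B = smul c (A ** B)"
  by (simp add: vec_eq_iff matrix_matrix_mult_def sum_distrib_left mult.left_commute)

lemma smul_cancel: "c \<noteq> 0 \<Longrightarrow> smul c A = smul c B \<longleftrightarrow> A = B"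
  by (auto simp: vec_eq_iff)

lemma smul_right_cancel: "A \<noteq> 0 \<Longrightarrow> smul a A = smul b A \<longleftrightarrow> a = b"
  by (auto simp: vec_eq_iff)

lemma matrix_inv:
  assumes "invertible (A::'a::semiring_1^'n^'n)"
  shows matrix_inv_right: "A ** matrix_inv A = mat 1"
    and matrix_inv_left: "matrix_inv A ** A = mat 1"
  using someI_ex[OF assms[unfolded invertible_def]] unfolding matrix_inv_def by auto

lemma invertible_matrix_inv: "invertible (A::'a::semiring_1^'n^'n) \<Longrightarrow> invertible (matrix_inv A)"
  using matrix_inv unfolding invertible_def by blast

lemma invertible_nonzero: "invertible (A::'a::{semiring_1,zero_neq_one}^'n^'n) \<Longrightarrow> A \<noteq> 0"
proof
  assume "invertible A" "A = 0"
  then have "(mat 1 :: 'a^'n^'n) = 0" by (auto simp: invertible_def)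
  then have "(mat 1 :: 'a^'n^'n) $ undefined $ undefined = 0" by simp
  then show False by (simp add: mat_def)
qed

lemma conj_mult:
  assumes "invertible (G::'a::semiring_1^'n^'n)"
  shows "G ** X ** matrix_inv G ** (G ** Y ** matrix_inv G) = G ** (X ** Y) ** matrix_inv G"
proof -
  have "G ** X ** matrix_inv G ** (G ** Y ** matrix_inv G)
      = G ** X ** (matrix_inv G ** G) ** Y ** matrix_inv G"
    by (simp add: matrix_mul_assoc)
  then show ?thesis by (simp add: matrix_inv_left[OF assms] matrix_mul_assoc)
qed

lemma conj_cancel:
  assumes "invertible (G::'a::semiring_1^'n^'n)"
  shows "G ** X ** matrix_inv G = G ** Y ** matrix_inv G \<longleftrightarrow> X = Y"
proof
  have unconj: "matrix_inv G ** (G ** Z ** matrix_inv G) ** G = Z" for Z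
  proof -
    have "matrix_inv G ** (G ** Z ** matrix_inv G) ** G
        = (matrix_inv G ** G) ** Z ** (matrix_inv G ** G)"
      by (simp add: matrix_mul_assoc)
    then show ?thesis by (simp add: matrix_inv_left[OF assms])
  qed
  assume eq: "G ** X ** matrix_inv G = G ** Y ** matrix_inv G"
  have "X = matrix_inv G ** (G ** X ** matrix_inv G) ** G" by (rule unconj[symmetric])
  also have "\<dots> = Y" by (simp only: eq unconj)
  finally show "X = Y" .
qed simp

lemma conj_smul: "G ** smul c X ** H = smul c (G ** X ** H)"
  by (simp add: smul_matrix_mul matrix_mul_smul)

lemma trace_conj:
  assumes "invertible (G::'a::comm_semiring_1^'n^'n)"
  shows "trace (G ** X ** matrix_inv G) = trace X"
proof -
  have "trace (G ** X ** matrix_inv G) = trace (matrix_inv G ** G ** X)"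
    by (simp add: trace_mul_sym[of _ "matrix_inv G"] matrix_mul_assoc)
  then show ?thesis by (simp add: matrix_inv_left[OF assms])
qed

lemma trace_smul: "trace (smul c M) = c * trace M"
  by (simp add: trace_def sum_distrib_left)

lemma diag_mat_nth: "diag_mat d $ k $ l = (if k = l then d k else 0)"
  by (simp add: diag_mat_def)

lemma matrix_mul_diag_mat_nth [simp]: "(M ** diag_mat d) $ k $ l = M $ k $ l * d l"
  by (simp add: matrix_matrix_mult_def diag_mat_nth if_distrib cong: if_cong)

lemma diag_mat_mul_nth [simp]: "(diag_mat d ** M) $ k $ l = d k * M $ k $ l"
proof -
  have "diag_mat d $ k $ m * M $ m $ l = (if m = k then d k * M $ k $ l else 0)" for m
    by (simp add: diag_mat_nth)
  then show ?thesis by (simp add: matrix_matrix_mult_def)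
qed

lemma diag_mat_mult: "diag_mat a ** diag_mat b = diag_mat (\<lambda>i. a i * b i)"
  by (simp add: vec_eq_iff diag_mat_nth)

lemma invertible_diag_mat: "\<forall>i. d i \<noteq> 0 \<Longrightarrow> invertible (diag_mat d)"
  unfolding invertible_right_inverse
  by (rule exI[of _ "diag_mat (\<lambda>i. inverse (d i))"]) (simp add: vec_eq_iff diag_mat_nth mat_def)

lemma trace_diag_mat: "trace (diag_mat d) = (\<Sum>i\<in>UNIV. d i)"
  by (simp add: trace_def diag_mat_nth)

definition perm_mat :: "('n \<Rightarrow> 'n) \<Rightarrow> complex^'n^'n" where
  "perm_mat \<sigma> = (\<chi> a b. if b = \<sigma> a then 1 else 0)"

lemma invertible_perm_mat:
  assumes "inj \<sigma>"
  shows "invertible (perm_mat \<sigma> :: complex^'n::finite^'n)"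
proof -
  have "perm_mat \<sigma> $ a $ c * transpose (perm_mat \<sigma>) $ c $ b
      = (if c = \<sigma> a then (if a = b then 1 else 0) else 0)" for a b c
    using assms by (auto simp: perm_mat_def transpose_def inj_eq)
  then have "perm_mat \<sigma> ** transpose (perm_mat \<sigma>) = mat 1"
    by (simp add: matrix_matrix_mult_def vec_eq_iff mat_def)
  then show ?thesis using invertible_right_inverse by blast
qed

lemma perm_mat_diag_mat:
  assumes "\<And>a. d (\<sigma> a) = c * d a"
  shows "perm_mat \<sigma> ** diag_mat d = smul c (diag_mat d ** perm_mat \<sigma>)"
  by (simp add: vec_eq_iff perm_mat_def assms)

section \<open>Projective classes and the group structure of PGL\<close>

lemma pcls_eq_iff: "pcls M = pcls N \<longleftrightarrow> (\<exists>c. c \<noteq> 0 \<and> N = smul c M)"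
proof
  assume "pcls M = pcls N"
  moreover have "N \<in> pcls N" unfolding pcls_def by (auto intro!: exI[of _ 1] simp: vec_eq_iff)
  ultimately show "\<exists>c. c \<noteq> 0 \<and> N = smul c M" by (auto simp: pcls_def smul_def)
next
  assume "\<exists>c. c \<noteq> 0 \<and> N = smul c M"
  then obtain c where c: "c \<noteq> 0" "N = smul c M" by blast
  show "pcls M = pcls N"
    unfolding pcls_def smul_def[symmetric]
  proof safe
    fix d :: complex assume "d \<noteq> 0"
    then show "\<exists>e. smul d M = smul e N \<and> e \<noteq> 0"
      using c by (intro exI[of _ "d / c"]) simp
  next
    fix d :: complex assume "d \<noteq> 0"
    then show "\<exists>e. smul d N = smul e M \<and> e \<noteq> 0"
      using c by (intro exI[of _ "d * c"]) simp
  qed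
qed

lemma pcls_smul: "c \<noteq> 0 \<Longrightarrow> pcls (smul c M) = pcls M"
  by (subst pcls_eq_iff) (auto intro!: exI[of _ "inverse c"])

lemma PGL_carrier: "carrier PGL = {pcls M | M. invertible M}"
  by (simp add: PGL_def)

lemma PGL_one: "\<one>\<^bsub>PGL\<^esub> = pcls (mat 1)"
  by (simp add: PGL_def)

lemma pcls_mult: "pcls M \<otimes>\<^bsub>PGL\<^esub> pcls N = pcls (M ** N)"
proof -
  have "{A ** B | A B. A \<in> pcls M \<and> B \<in> pcls N} = pcls (M ** N)"
  proof (intro equalityI subsetI)
    fix X assume "X \<in> {A ** B | A B. A \<in> pcls M \<and> B \<in> pcls N}"
    then obtain c d where "c \<noteq> 0" "d \<noteq> 0" "X = smul c M ** smul d N"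
      unfolding pcls_def smul_def[symmetric] by blast
    then show "X \<in> pcls (M ** N)" unfolding pcls_def smul_def[symmetric]
      by (auto simp: smul_matrix_mul matrix_mul_smul mult.commute intro!: exI[of _ "c * d"])
  next
    fix X assume "X \<in> pcls (M ** N)"
    then obtain c where "c \<noteq> 0" "X = smul c M ** smul 1 N"
      unfolding pcls_def smul_def[symmetric] by (auto simp: smul_matrix_mul)
    then show "X \<in> {A ** B | A B. A \<in> pcls M \<and> B \<in> pcls N}"
      unfolding pcls_def smul_def[symmetric] by fastforce
  qed
  then show ?thesis by (simp add: PGL_def)
qed

lemma group_PGL: "group (PGL :: (complex^'n::finite^'n) set monoid)"
proof (rule groupI)
  show "\<one>\<^bsub>PGL\<^esub> \<in> carrier (PGL :: (complex^'n^'n) set monoid)"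
    by (auto simp: PGL_carrier PGL_one invertible_def)
  fix x y z :: "(complex^'n^'n) set"
  assume "x \<in> carrier PGL" "y \<in> carrier PGL" "z \<in> carrier PGL"
  then show "x \<otimes>\<^bsub>PGL\<^esub> y \<in> carrier PGL"
    and "x \<otimes>\<^bsub>PGL\<^esub> y \<otimes>\<^bsub>PGL\<^esub> z = x \<otimes>\<^bsub>PGL\<^esub> (y \<otimes>\<^bsub>PGL\<^esub> z)"
    and "\<one>\<^bsub>PGL\<^esub> \<otimes>\<^bsub>PGL\<^esub> x = x"
    by (auto simp: PGL_carrier PGL_one pcls_mult matrix_mul_assoc invertible_mult)
  from \<open>x \<in> carrier PGL\<close> obtain M where "x = pcls M" "invertible M"
    by (auto simp: PGL_carrier)
  then show "\<exists>w\<in>carrier PGL. w \<otimes>\<^bsub>PGL\<^esub> x = \<one>\<^bsub>PGL\<^esub>"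
    by (intro bexI[of _ "pcls (matrix_inv M)"])
       (auto simp: PGL_carrier PGL_one pcls_mult matrix_inv_left invertible_matrix_inv)
qed

lemma PGL_inv: "invertible M \<Longrightarrow> inv\<^bsub>PGL\<^esub> (pcls M) = pcls (matrix_inv M)"
  by (rule group.inv_equality[OF group_PGL])
     (auto simp: PGL_carrier PGL_one pcls_mult matrix_inv_left invertible_matrix_inv)

lemma PGL_conj:
  "invertible H \<Longrightarrow> pcls H \<otimes>\<^bsub>PGL\<^esub> pcls X \<otimes>\<^bsub>PGL\<^esub> inv\<^bsub>PGL\<^esub> (pcls H) = pcls (H ** X ** matrix_inv H)"
  by (simp add: PGL_inv pcls_mult)

lemma pcls_conj_eq_iff:
  fixes G :: "complex^'n::finite^'n"
  assumes "invertible G"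
  shows "pcls (G ** X ** matrix_inv G) = pcls (G ** Y ** matrix_inv G) \<longleftrightarrow> (\<exists>c. c \<noteq> 0 \<and> Y = smul c X)"
proof -
  have "G ** Y ** matrix_inv G = smul c (G ** X ** matrix_inv G) \<longleftrightarrow> Y = smul c X" for c
    using conj_cancel[OF assms, of Y "smul c X"] by (simp add: conj_smul)
  then show ?thesis by (simp add: pcls_eq_iff)
qed

lemma toral_diagonalizable:
  fixes A :: "(complex^'n::finite^'n) set set"
  assumes "toral A"
  shows "\<exists>G::complex^'n^'n. invertible G \<and> (\<forall>x\<in>A. \<exists>d. (\<forall>i. d i \<noteq> 0) \<and> x = pcls (G ** diag_mat d ** matrix_inv G))"
proof -
  obtain g where g: "g \<in> carrier PGL" and A: "A \<subseteq> (\<lambda>t. g \<otimes>\<^bsub>PGL\<^esub> t \<otimes>\<^bsub>PGL\<^esub> inv\<^bsub>PGL\<^esub> g) ` diag_torus"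
    using assms unfolding toral_def maximal_torus_def by blast
  obtain G where G: "g = pcls G" "invertible G" using g by (auto simp: PGL_carrier)
  show ?thesis
  proof (intro exI[of _ G] conjI ballI)
    fix x assume "x \<in> A"
    with A obtain d where "\<forall>i. d i \<noteq> 0" "x = g \<otimes>\<^bsub>PGL\<^esub> pcls (diag_mat d) \<otimes>\<^bsub>PGL\<^esub> inv\<^bsub>PGL\<^esub> g"
      by (auto simp: diag_torus_def)
    then show "\<exists>d. (\<forall>i. d i \<noteq> 0) \<and> x = pcls (G ** diag_mat d ** matrix_inv G)"
      using PGL_conj[OF G(2)] G(1) by auto
  qed (rule G(2))
qed

lemma (in group) ord_eq_prime:
  assumes "prime p" "x \<in> carrier G" "x [^] p = \<one>" "x \<noteq> \<one>"
  shows "ord x = p"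
  using assms pow_eq_id[of x p] ord_eq_1[of x] prime_nat_iff by blast

lemma elem_abelian_p_subgroup_ord:
  assumes "elem_abelian_p_subgroup p r A" "prime p" "x \<in> A" "x \<noteq> \<one>\<^bsub>PGL\<^esub>"
  shows "group.ord PGL x = p"
proof -
  interpret PGL: group PGL by (rule group_PGL)
  show ?thesis
    using assms subgroup.subset by (intro PGL.ord_eq_prime) (auto simp: elem_abelian_p_subgroup_def)
qed

lemma elem_abelian_p_subgroup_nontrivial:
  assumes "elem_abelian_p_subgroup p r A" "prime p" "r \<ge> 1"
  shows "A \<noteq> {\<one>\<^bsub>PGL\<^esub>}"
proof -
  have "card A > 1"
    using assms prime_gt_1_nat one_less_power[of p r] by (simp add: elem_abelian_p_subgroup_def)
  then show ?thesis by auto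
qed

section \<open>Traceless classes\<close>

definition traceless :: "(complex^'n^'n) set \<Rightarrow> bool" where
  "traceless x \<longleftrightarrow> (\<forall>M\<in>x. trace M = 0)"

lemma traceless_pcls: "traceless (pcls M) \<longleftrightarrow> trace M = 0"
  by (auto simp: traceless_def pcls_def smul_def[symmetric] trace_smul intro: exI[of _ 1])

lemma traceless_conj:
  assumes "g \<in> carrier PGL" "x \<in> carrier PGL"
  shows "traceless (g \<otimes>\<^bsub>PGL\<^esub> x \<otimes>\<^bsub>PGL\<^esub> inv\<^bsub>PGL\<^esub> g) \<longleftrightarrow> traceless x"
  using assms by (auto simp: PGL_carrier PGL_conj traceless_pcls trace_conj)

lemma sum_lessThan_mult_div:
  fixes f :: "nat \<Rightarrow> 'a::comm_semiring_1"
  shows "(\<Sum>m<p * k. f (m div k)) = of_nat k * (\<Sum>q<p. f q)"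
proof (cases "k = 0")
  case False
  have "(\<Sum>m\<in>{q * k..<q * k + k}. f (m div k)) = of_nat k * f q" for q
  proof -
    have "m div k = q" if "m \<in> {q * k..<q * k + k}" for m
      using that by (intro div_nat_eqI) (auto simp: mult.commute)
    then show ?thesis by simp
  qed
  then have "(\<Sum>m<p * k. f (m div k)) = (\<Sum>q<p. of_nat k * f q)"
    by (simp flip: sum.nat_group[of _ k p])
  then show ?thesis by (simp add: sum_distrib_left)
qed simp

lemma sum_powers_root_of_unity:
  assumes "p > 1"
  shows "(\<Sum>q<p. exp (2 * of_real pi * \<i> / of_nat p) ^ q) = 0"
proof -
  have "exp (2 * of_real pi * \<i> / of_nat p) ^ q = cis (2 * pi * real q / real p)" for q
    by (simp add: cis_conv_exp flip: exp_of_nat_mult) (simp add: field_simps)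
  moreover have "\<Sum>{z::complex. z ^ p = 1} = (\<Sum>q<p. cis (2 * pi * real q / real p))"
    using assms by (intro sum.reindex_bij_betw[symmetric] Complex.bij_betw_roots_unity) auto
  ultimately have "(\<Sum>q<p. exp (2 * of_real pi * \<i> / of_nat p) ^ q) = \<Sum>{z::complex. z ^ p = 1}"
    by simp
  also have "\<dots> = 0" by (rule sum_roots_unity[OF assms])
  finally show ?thesis .
qed

lemma idx_bij: "bij_betw (idx :: 'n::finite \<Rightarrow> nat) UNIV {..<CARD('n)}"
proof -
  have "\<exists>f. bij_betw f (UNIV::'n set) {..<CARD('n)}"
    using ex_bij_betw_finite_nat[of "UNIV::'n set"] by (simp add: atLeast0LessThan)
  then show ?thesis unfolding idx_def by (rule someI_ex)
qed

lemma traceless_e_elt: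
  assumes "p > 1" "p dvd CARD('n::finite)"
  shows "traceless (e_elt p :: (complex^'n^'n) set)"
proof -
  define \<alpha> where "\<alpha> = exp (2 * of_real pi * \<i> / of_nat p)"
  define k where "k = CARD('n) div p"
  have n: "CARD('n) = p * k" using assms(2) by (simp add: k_def)
  have "(\<Sum>i::'n\<in>UNIV. \<alpha> ^ (idx i div k)) = (\<Sum>m<CARD('n). \<alpha> ^ (m div k))"
    using sum.reindex_bij_betw[OF idx_bij] by fastforce
  also have "\<dots> = of_nat k * (\<Sum>q<p. \<alpha> ^ q)"
    by (simp add: n sum_lessThan_mult_div)
  also have "\<dots> = 0"
    unfolding \<alpha>_def using sum_powers_root_of_unity[OF assms(1)] by simp
  finally show ?thesis
    by (simp add: e_elt_def traceless_pcls trace_diag_mat \<alpha>_def k_def)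
qed

section \<open>Centralisers twisting a diagonalisable matrix\<close>

lemma openin_PGL_top:
  "openin PGL_top U \<longleftrightarrow> U \<subseteq> carrier PGL \<and> open {M::complex^'n::finite^'n. invertible M \<and> pcls M \<in> U}"
proof -
  have "istopology (\<lambda>U. U \<subseteq> carrier PGL \<and> open {M::complex^'n^'n. invertible M \<and> pcls M \<in> U})"
  proof -
    have "{M. invertible M \<and> pcls M \<in> \<Union>K} = (\<Union>S\<in>K. {M. invertible M \<and> pcls M \<in> S})"
      for K :: "(complex^'n^'n) set set set" by auto
    moreover have "{M. invertible M \<and> pcls M \<in> S \<inter> T}
        = {M. invertible M \<and> pcls M \<in> S} \<inter> {M. invertible M \<and> pcls M \<in> T}"
      for S T :: "(complex^'n^'n) set set" by auto
    ultimately show ?thesis unfolding istopology_def by auto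
  qed
  then show ?thesis unfolding PGL_top_def by (simp add: topology_inverse')
qed

lemma open_invertible: "open {M::complex^'n::finite^'n. invertible M}"
proof -
  have "continuous_on UNIV (det :: complex^'n^'n \<Rightarrow> complex)"
    unfolding det_def by (intro continuous_intros)
  then have "open {M::complex^'n^'n. det M \<noteq> 0}"
    by (intro open_Collect_neq) (auto intro: continuous_intros)
  then show ?thesis by (simp add: invertible_det_nz)
qed

lemma
  fixes P :: "complex^'n::finite^'n \<Rightarrow> bool"
  assumes scale: "\<And>M c. c \<noteq> 0 \<Longrightarrow> P (smul c M) \<longleftrightarrow> P M"
  shows pcls_mem_classes_iff:
      "invertible M \<Longrightarrow> pcls M \<in> {pcls N | N. invertible N \<and> P N} \<longleftrightarrow> P M"
    and openin_PGL_top_classes: "open {M. P M} \<Longrightarrow> openin PGL_top {pcls N | N. invertible N \<and> P N}"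
proof -
  have preimage: "{M. invertible M \<and> pcls M \<in> {pcls N | N. invertible N \<and> P N}} = {M. invertible M \<and> P M}"
  proof safe
    fix M N assume "invertible M" "pcls M = pcls N" "invertible N" "P N"
    then show "P M" using scale by (metis pcls_eq_iff)
  qed blast
  then show "invertible M \<Longrightarrow> pcls M \<in> {pcls N | N. invertible N \<and> P N} \<longleftrightarrow> P M"
    by blast
  show "open {M. P M} \<Longrightarrow> openin PGL_top {pcls N | N. invertible N \<and> P N}"
    unfolding openin_PGL_top preimage
    by (auto simp: PGL_carrier Collect_conj_eq intro!: open_Int open_invertible)
qed

lemma open_not_twisted: "open {M::complex^'n::finite^'n. M ** X \<noteq> smul c (X ** M)}"
proof -
  have "continuous_on UNIV (\<lambda>M::complex^'n^'n. M ** X)"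
    "continuous_on UNIV (\<lambda>M::complex^'n^'n. smul c (X ** M))"
    unfolding matrix_matrix_mult_def smul_def by (intro continuous_intros)+
  then show ?thesis by (intro open_Collect_neq)
qed

lemma smul_twist_iff:
  "c \<noteq> 0 \<Longrightarrow> smul c M ** X = smul a (X ** smul c M) \<longleftrightarrow> M ** X = smul a (X ** M)"
proof -
  assume c: "c \<noteq> 0"
  have "smul a (X ** smul c M) = smul c (smul a (X ** M))"
    by (simp add: matrix_mul_smul mult.commute)
  then show ?thesis by (simp only: smul_matrix_mul smul_cancel[OF c])
qed

lemma smul_commute_iff: "c \<noteq> 0 \<Longrightarrow> smul c M ** X = X ** smul c M \<longleftrightarrow> M ** X = X ** M"
  by (simp add: smul_matrix_mul matrix_mul_smul smul_cancel)

lemma twist_scalar_unique: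
  fixes X M :: "complex^'n::finite^'n"
  assumes "invertible X" "invertible M" "M ** X = smul a (X ** M)"
  shows "M ** X = smul b (X ** M) \<longleftrightarrow> b = a"
  using assms smul_right_cancel[OF invertible_nonzero[OF invertible_mult[OF assms(1,2)]]] by metis

lemma twist_scalar_eigenvalue_ratio:
  fixes G :: "complex^'n::finite^'n"
  assumes G: "invertible G" and M: "invertible M" and d: "\<forall>i. d i \<noteq> 0"
    and twist: "M ** (G ** diag_mat d ** matrix_inv G) = smul c (G ** diag_mat d ** matrix_inv G ** M)"
  shows "\<exists>k l. c = d l / d k"
proof -
  define M' where "M' = matrix_inv G ** M ** G"
  have M_conj: "M = G ** M' ** matrix_inv G"
    unfolding M'_def by (metis G matrix_inv_right matrix_mul_assoc matrix_mul_lid matrix_mul_rid)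
  have "invertible M'"
    unfolding M'_def by (intro invertible_mult invertible_matrix_inv G M)
  then obtain a b where ab: "M' $ a $ b \<noteq> 0"
    using invertible_nonzero by (metis vec_eq_iff zero_index)
  have "G ** (M' ** diag_mat d) ** matrix_inv G = G ** smul c (diag_mat d ** M') ** matrix_inv G"
    using twist unfolding M_conj conj_mult[OF G] conj_smul .
  then have "M' ** diag_mat d = smul c (diag_mat d ** M')"
    by (simp only: conj_cancel[OF G])
  then have "M' $ a $ b * d b = c * (d a * M' $ a $ b)"
    by (metis matrix_mul_diag_mat_nth diag_mat_mul_nth smul_nth)
  then show ?thesis using ab d by (intro exI[of _ a] exI[of _ b]) (simp add: field_simps)
qed

text \<open>If \<open>pcls N\<close> commutes with \<open>pcls X\<close>, then \<open>N X = a X N\<close> for a unique scalar \<open>a\<close>,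
  which is a ratio of eigenvalues of \<open>X\<close>. Excluding the finitely many ratios other than \<open>1\<close>,
  respectively excluding \<open>1\<close>, is an open condition, so the two cases split the centraliser
  into open pieces.\<close>

lemma not_connectedin_twisting_centralizer:
  fixes G :: "complex^'n::finite^'n" and d :: "'n \<Rightarrow> complex" and C :: "(complex^'n^'n) set set"
  defines "X \<equiv> G ** diag_mat d ** matrix_inv G"
  assumes G: "invertible G" and d: "\<forall>i. d i \<noteq> 0"
    and C: "C \<subseteq> {g \<in> carrier PGL. g \<otimes>\<^bsub>PGL\<^esub> pcls X = pcls X \<otimes>\<^bsub>PGL\<^esub> g}"
    and one: "\<one>\<^bsub>PGL\<^esub> \<in> C"
    and M: "invertible M" "pcls M \<in> C" "M ** X = smul c (X ** M)" "c \<noteq> 1"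
  shows "\<not> connectedin PGL_top C"
proof -
  have X: "invertible X"
    unfolding X_def using G d by (simp add: invertible_mult invertible_matrix_inv invertible_diag_mat)
  define R where "R = (\<lambda>(k, l). d l / d k) ` UNIV - {1}"
  define E1 where "E1 = {pcls N | N. invertible N \<and> (\<forall>a\<in>R. N ** X \<noteq> smul a (X ** N))}"
  define E2 where "E2 = {pcls N | N. invertible N \<and> N ** X \<noteq> X ** N}"
  have E1: "pcls N \<in> E1 \<longleftrightarrow> (\<forall>a\<in>R. N ** X \<noteq> smul a (X ** N))" if "invertible N" for N
    unfolding E1_def by (rule pcls_mem_classes_iff) (simp_all add: smul_twist_iff that)
  have E2: "pcls N \<in> E2 \<longleftrightarrow> N ** X \<noteq> X ** N" if "invertible N" for N
    unfolding E2_def by (rule pcls_mem_classes_iff) (simp_all add: smul_commute_iff that)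
  have "{N. \<forall>a\<in>R. N ** X \<noteq> smul a (X ** N)} = (\<Inter>a\<in>R. {N. N ** X \<noteq> smul a (X ** N)})"
    by auto
  then have "openin PGL_top E1"
    unfolding E1_def by (intro openin_PGL_top_classes) (simp_all add: smul_twist_iff open_INT R_def open_not_twisted)
  moreover have "openin PGL_top E2"
    unfolding E2_def
    by (intro openin_PGL_top_classes) (simp_all add: smul_commute_iff open_not_twisted[of X 1, simplified])
  moreover have separated: "g \<in> E1 \<longleftrightarrow> g \<notin> E2" if g: "g \<in> C" for g
  proof -
    obtain N where N: "g = pcls N" "invertible N"
      using g C unfolding PGL_carrier by blast
    then have "pcls (N ** X) = pcls (X ** N)"
      using g C by (auto simp: pcls_mult)
    then obtain b where "b \<noteq> 0" "X ** N = smul b (N ** X)"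
      by (auto simp: pcls_eq_iff)
    then have twist: "N ** X = smul (inverse b) (X ** N)" by simp
    then obtain k l where "inverse b = d l / d k"
      using twist_scalar_eigenvalue_ratio[OF G N(2) d] unfolding X_def by blast
    then have ratio: "inverse b \<in> R \<longleftrightarrow> inverse b \<noteq> 1" unfolding R_def by auto
    have unique: "N ** X = smul a (X ** N) \<longleftrightarrow> a = inverse b" for a
      by (rule twist_scalar_unique[OF X N(2) twist])
    have "g \<in> E1 \<longleftrightarrow> inverse b \<notin> R"
      using E1[OF N(2)] N(1) unique by auto
    moreover have "g \<in> E2 \<longleftrightarrow> inverse b \<noteq> 1"
      using E2[OF N(2)] N(1) unique[of 1] by auto
    ultimately show ?thesis using ratio by blast
  qed
  moreover have "\<one>\<^bsub>PGL\<^esub> \<in> E1 \<inter> C"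
  proof -
    have "invertible (mat 1 :: complex^'n^'n)"
      by (auto simp: invertible_def)
    then have "pcls (mat 1) \<notin> E2" using E2 by simp
    then show ?thesis using one separated[OF one] by (simp add: PGL_one)
  qed
  moreover have "pcls M \<in> E2 \<inter> C"
    using M E2[OF M(1)] twist_scalar_unique[OF X M(1) M(3), of 1] by auto
  ultimately show ?thesis
    unfolding connectedin by blast
qed

section \<open>Weights of a simultaneously diagonalised subgroup\<close>

lemma (in group) sum_hom_subgroup:
  fixes \<phi> :: "'a \<Rightarrow> 'c::field"
  assumes H: "subgroup H G" and hom: "\<And>x y. x \<in> H \<Longrightarrow> y \<in> H \<Longrightarrow> \<phi> (x \<otimes> y) = \<phi> x * \<phi> y"
  shows "(\<Sum>x\<in>H. \<phi> x) = (if \<forall>x\<in>H. \<phi> x = 1 then of_nat (card H) else 0)"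
proof (cases "\<forall>x\<in>H. \<phi> x = 1")
  case False
  then obtain y where y: "y \<in> H" "\<phi> y \<noteq> 1" by blast
  have "bij_betw (\<lambda>x. y \<otimes> x) H H"
    by (rule bij_betw_byWitness[where f'="\<lambda>x. inv y \<otimes> x"])
       (use H y in \<open>auto simp: subgroup.mem_carrier subgroup.m_closed subgroup.m_inv_closed
                               m_assoc[symmetric]\<close>)
  then have "(\<Sum>x\<in>H. \<phi> x) = (\<Sum>x\<in>H. \<phi> (y \<otimes> x))"
    using sum.reindex_bij_betw[of _ H H \<phi>] by simp
  also have "\<dots> = \<phi> y * (\<Sum>x\<in>H. \<phi> x)"
    by (simp add: hom y(1) sum_distrib_left)
  finally have "(1 - \<phi> y) * (\<Sum>x\<in>H. \<phi> x) = 0" by (simp add: algebra_simps)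
  then show ?thesis using False y(2) by auto
qed simp

locale diagonalized_subgroup =
  fixes A :: "(complex^'n::finite^'n) set set" and G :: "complex^'n^'n"
  assumes subgroup: "subgroup A PGL" and finite: "finite A" and invertible: "invertible G"
    and diagonal: "x \<in> A \<Longrightarrow> \<exists>d. (\<forall>i. d i \<noteq> 0) \<and> x = pcls (G ** diag_mat d ** matrix_inv G)"
begin

definition eigenvalues :: "(complex^'n^'n) set \<Rightarrow> 'n \<Rightarrow> complex" where
  "eigenvalues x = (SOME d. (\<forall>i. d i \<noteq> 0) \<and> x = pcls (G ** diag_mat d ** matrix_inv G))"

definition lift :: "(complex^'n^'n) set \<Rightarrow> complex^'n^'n" where
  "lift x = G ** diag_mat (eigenvalues x) ** matrix_inv G"

text \<open>The eigenvalues of a lift are determined only up to a common scalar; normalising them at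
  the arbitrary index \<open>undefined\<close> turns them into characters of \<open>A\<close>.\<close>

definition weight :: "'n \<Rightarrow> (complex^'n^'n) set \<Rightarrow> complex" where
  "weight k x = eigenvalues x k / eigenvalues x undefined"

lemma
  assumes "x \<in> A"
  shows eigenvalues_nonzero: "eigenvalues x i \<noteq> 0"
    and pcls_lift: "pcls (lift x) = x"
  using someI_ex[OF diagonal[OF assms]] unfolding eigenvalues_def[symmetric] lift_def by auto

lemma weight_nonzero: "x \<in> A \<Longrightarrow> weight k x \<noteq> 0"
  by (simp add: weight_def eigenvalues_nonzero)

lemma one_mem: "\<one>\<^bsub>PGL\<^esub> \<in> A"
  by (rule subgroup.one_closed[OF subgroup])

lemma eigenvalues_mult:
  assumes x: "x \<in> A" and y: "y \<in> A"
  obtains c where "\<And>i. eigenvalues (x \<otimes>\<^bsub>PGL\<^esub> y) i = c * (eigenvalues x i * eigenvalues y i)"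
proof -
  have "x \<otimes>\<^bsub>PGL\<^esub> y \<in> A" by (rule subgroup.m_closed[OF subgroup x y])
  have "pcls (G ** diag_mat (\<lambda>i. eigenvalues x i * eigenvalues y i) ** matrix_inv G)
      = pcls (lift x ** lift y)"
    by (simp add: lift_def conj_mult[OF invertible] diag_mat_mult)
  also have "\<dots> = x \<otimes>\<^bsub>PGL\<^esub> y"
    by (simp add: pcls_lift x y flip: pcls_mult)
  also have "\<dots> = pcls (G ** diag_mat (eigenvalues (x \<otimes>\<^bsub>PGL\<^esub> y)) ** matrix_inv G)"
    using pcls_lift[OF \<open>x \<otimes>\<^bsub>PGL\<^esub> y \<in> A\<close>] by (simp add: lift_def)
  finally have "\<exists>c. c \<noteq> 0 \<and> diag_mat (eigenvalues (x \<otimes>\<^bsub>PGL\<^esub> y))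
      = smul c (diag_mat (\<lambda>i. eigenvalues x i * eigenvalues y i))"
    by (simp only: pcls_conj_eq_iff[OF invertible])
  then obtain c where "diag_mat (eigenvalues (x \<otimes>\<^bsub>PGL\<^esub> y))
      = smul c (diag_mat (\<lambda>i. eigenvalues x i * eigenvalues y i))"
    by blast
  then have "diag_mat (eigenvalues (x \<otimes>\<^bsub>PGL\<^esub> y)) $ i $ i
      = smul c (diag_mat (\<lambda>i. eigenvalues x i * eigenvalues y i)) $ i $ i" for i
    by simp
  then have "eigenvalues (x \<otimes>\<^bsub>PGL\<^esub> y) i = c * (eigenvalues x i * eigenvalues y i)" for i
    by (simp add: diag_mat_nth)
  then show ?thesis by (rule that)
qed

lemma weight_mult:
  assumes x: "x \<in> A" and y: "y \<in> A"
  shows "weight k (x \<otimes>\<^bsub>PGL\<^esub> y) = weight k x * weight k y"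
proof -
  obtain c where c: "\<And>i. eigenvalues (x \<otimes>\<^bsub>PGL\<^esub> y) i = c * (eigenvalues x i * eigenvalues y i)"
    using eigenvalues_mult[OF x y] by blast
  moreover have "eigenvalues (x \<otimes>\<^bsub>PGL\<^esub> y) undefined \<noteq> 0"
    using eigenvalues_nonzero subgroup.m_closed[OF subgroup x y] by blast
  ultimately have "c \<noteq> 0" by auto
  then show ?thesis by (simp add: weight_def c)
qed

lemma weight_one: "weight k \<one>\<^bsub>PGL\<^esub> = 1"
proof -
  interpret PGL: group PGL by (rule group_PGL)
  have "weight k \<one>\<^bsub>PGL\<^esub> * weight k \<one>\<^bsub>PGL\<^esub> = weight k \<one>\<^bsub>PGL\<^esub> * 1"
    using weight_mult[OF one_mem one_mem, of k] by simp
  then show ?thesis using weight_nonzero[OF one_mem, of k] by simp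
qed

lemma exists_twisting_centralizer:
  assumes shift: "inj \<sigma>" "\<And>k y. y \<in> A \<Longrightarrow> weight (\<sigma> k) y = weight j y * weight k y"
  obtains M where "invertible M" "pcls M \<in> pgl_centralizer A"
    and "\<And>y. y \<in> A \<Longrightarrow> M ** lift y = smul (weight j y) (lift y ** M)"
proof
  let ?M = "G ** perm_mat \<sigma> ** matrix_inv G"
  show "invertible ?M"
    by (intro invertible_mult invertible_matrix_inv invertible invertible_perm_mat shift(1))
  show twist: "?M ** lift y = smul (weight j y) (lift y ** ?M)" if "y \<in> A" for y
  proof -
    have "eigenvalues y (\<sigma> a) = weight j y * eigenvalues y a" for a
      using shift(2)[OF that, of a] eigenvalues_nonzero[OF that]
      by (simp add: weight_def field_simps)
    then have "perm_mat \<sigma> ** diag_mat (eigenvalues y)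
        = smul (weight j y) (diag_mat (eigenvalues y) ** perm_mat \<sigma>)"
      by (rule perm_mat_diag_mat)
    then show ?thesis
      by (simp add: lift_def conj_mult[OF invertible] conj_smul)
  qed
  show "pcls ?M \<in> pgl_centralizer A"
    unfolding pgl_centralizer_def
  proof (intro CollectI conjI ballI)
    show "pcls ?M \<in> carrier PGL"
      using \<open>invertible ?M\<close> by (auto simp: PGL_carrier)
    fix y assume y: "y \<in> A"
    have "pcls ?M \<otimes>\<^bsub>PGL\<^esub> y = pcls (?M ** lift y)"
      using pcls_lift[OF y] pcls_mult by metis
    also have "\<dots> = pcls (lift y ** ?M)"
      by (simp add: twist[OF y] pcls_smul weight_nonzero[OF y])
    also have "\<dots> = y \<otimes>\<^bsub>PGL\<^esub> pcls ?M"
      using pcls_lift[OF y] pcls_mult by metis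
    finally show "pcls ?M \<otimes>\<^bsub>PGL\<^esub> y = y \<otimes>\<^bsub>PGL\<^esub> pcls ?M" .
  qed
qed

end

locale traceless_diagonalized_subgroup = diagonalized_subgroup A G
  for A :: "(complex^'n::finite^'n) set set" and G +
  assumes traceless_nontrivial: "x \<in> A \<Longrightarrow> x \<noteq> \<one>\<^bsub>PGL\<^esub> \<Longrightarrow> traceless x"
begin

lemma sum_weights:
  assumes "x \<in> A"
  shows "(\<Sum>k\<in>UNIV. weight k x) = (if x = \<one>\<^bsub>PGL\<^esub> then of_nat CARD('n) else 0)"
proof (cases "x = \<one>\<^bsub>PGL\<^esub>")
  case False
  then have "trace (lift x) = 0"
    using traceless_nontrivial[OF assms] pcls_lift[OF assms] traceless_pcls by metis
  then have "(\<Sum>k\<in>UNIV. eigenvalues x k) = 0"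
    by (simp add: lift_def trace_conj[OF invertible] trace_diag_mat)
  then show ?thesis using False by (simp add: weight_def flip: sum_divide_distrib)
qed (simp add: weight_one)

text \<open>Orthogonality of characters, with the weight sums of \<open>sum_weights\<close>.\<close>

lemma card_weights_eq:
  assumes hom: "\<And>x y. x \<in> A \<Longrightarrow> y \<in> A \<Longrightarrow> \<psi> (x \<otimes>\<^bsub>PGL\<^esub> y) = \<psi> x * \<psi> y"
    and nonzero: "\<And>x. x \<in> A \<Longrightarrow> \<psi> x \<noteq> 0"
  shows "card {k. \<forall>x\<in>A. weight k x = \<psi> x} * card A = CARD('n)"
proof -
  interpret PGL: group PGL by (rule group_PGL)
  have "\<psi> \<one>\<^bsub>PGL\<^esub> = 1"
    using hom[OF one_mem one_mem] nonzero[OF one_mem] by simp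
  have "(\<Sum>x\<in>A. weight k x / \<psi> x) = (if \<forall>x\<in>A. weight k x = \<psi> x then of_nat (card A) else 0)" for k
    using PGL.sum_hom_subgroup[OF subgroup, of "\<lambda>x. weight k x / \<psi> x"] nonzero
    by (simp add: weight_mult hom)
  then have "(\<Sum>k\<in>UNIV. \<Sum>x\<in>A. weight k x / \<psi> x) = of_nat (card {k. \<forall>x\<in>A. weight k x = \<psi> x} * card A)"
    by (simp add: sum.If_cases)
  moreover have "(\<Sum>k\<in>UNIV. \<Sum>x\<in>A. weight k x / \<psi> x) = (\<Sum>x\<in>A. (\<Sum>k\<in>UNIV. weight k x) / \<psi> x)"
    by (subst sum.swap) (simp add: sum_divide_distrib)
  moreover have "(\<Sum>x\<in>A. (\<Sum>k\<in>UNIV. weight k x) / \<psi> x) = of_nat CARD('n)"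
  proof -
    have "(\<Sum>k\<in>UNIV. weight k x) / \<psi> x = (if x = \<one>\<^bsub>PGL\<^esub> then of_nat CARD('n) else 0)"
      if "x \<in> A" for x
      using sum_weights[OF that] \<open>\<psi> \<one>\<^bsub>PGL\<^esub> = 1\<close> by simp
    then show ?thesis
      using finite one_mem by (simp add: sum.delta cong: sum.cong)
  qed
  ultimately have "of_nat (card {k. \<forall>x\<in>A. weight k x = \<psi> x} * card A) = (of_nat CARD('n) :: complex)"
    by simp
  then show ?thesis by (simp only: of_nat_eq_iff)
qed

lemma weight_shift_permutation:
  obtains \<sigma> where "inj \<sigma>" "\<And>k y. y \<in> A \<Longrightarrow> weight (\<sigma> k) y = weight j y * weight k y"
proof -
  define S where "S k = {l. \<forall>x\<in>A. weight l x = weight k x}" for k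
  define T where "T k = {l. \<forall>x\<in>A. weight l x = weight j x * weight k x}" for k
  have "card (S k) * card A = CARD('n)" "card (T k) * card A = CARD('n)" for k
    unfolding S_def T_def by (rule card_weights_eq; simp add: weight_mult weight_nonzero)+
  moreover have "card A > 0"
    using finite one_mem card_gt_0_iff by blast
  ultimately have "card (S k) = card (T k)" for k
    by (metis mult_right_cancel not_gr0)
  then have bij_exists: "\<exists>h. bij_betw h (S k) (T k)" for k
    by (intro finite_same_card_bij) simp_all
  define f where "f k = (SOME h. bij_betw h (S k) (T k))" for k
  have f: "bij_betw (f k) (S k) (T k)" for k
    unfolding f_def by (rule someI_ex[OF bij_exists])
  have f_eq: "f l = f k" if "l \<in> S k" for k l
    using that by (simp add: f_def S_def T_def)
  define \<sigma> where "\<sigma> k = f k k" for k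
  have k_in_S: "k \<in> S k" for k by (simp add: S_def)
  have \<sigma>_in_T: "\<sigma> k \<in> T k" for k
    using f[of k] k_in_S[of k] unfolding \<sigma>_def bij_betw_def by blast
  have "inj \<sigma>"
  proof (rule injI)
    fix k l assume "\<sigma> k = \<sigma> l"
    then have "weight j x * weight k x = weight j x * weight l x" if "x \<in> A" for x
      using \<sigma>_in_T[of k] \<sigma>_in_T[of l] that by (auto simp: T_def)
    then have "l \<in> S k"
      by (auto simp: S_def weight_nonzero)
    then have "f l = f k" by (rule f_eq)
    then show "k = l"
      using f[of k] k_in_S[of k] \<open>l \<in> S k\<close> \<open>\<sigma> k = \<sigma> l\<close>
      unfolding \<sigma>_def bij_betw_def inj_on_def by metis
  qed
  then show ?thesis using that \<sigma>_in_T by (auto simp: T_def)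
qed

lemma not_connectedin_centralizer:
  assumes "A \<noteq> {\<one>\<^bsub>PGL\<^esub>}"
  shows "\<not> connectedin PGL_top (pgl_centralizer A)"
proof -
  interpret PGL: group PGL by (rule group_PGL)
  obtain x where x: "x \<in> A" "x \<noteq> \<one>\<^bsub>PGL\<^esub>"
    using assms one_mem by blast
  obtain j where j: "weight j x \<noteq> 1"
    using sum_weights[OF x(1)] x(2) by force
  obtain \<sigma> where \<sigma>: "inj \<sigma>" "\<And>k y. y \<in> A \<Longrightarrow> weight (\<sigma> k) y = weight j y * weight k y"
    using weight_shift_permutation[where j = j] by blast
  obtain M where M: "invertible M" "pcls M \<in> pgl_centralizer A"
    "\<And>y. y \<in> A \<Longrightarrow> M ** lift y = smul (weight j y) (lift y ** M)"
    using exists_twisting_centralizer[OF \<sigma>] by blast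
  have "\<forall>i. eigenvalues x i \<noteq> 0"
    using eigenvalues_nonzero[OF x(1)] by blast
  moreover have "pgl_centralizer A \<subseteq> {g \<in> carrier PGL. g \<otimes>\<^bsub>PGL\<^esub> pcls (lift x) = pcls (lift x) \<otimes>\<^bsub>PGL\<^esub> g}"
    using x(1) by (auto simp: pgl_centralizer_def pcls_lift)
  moreover have "\<one>\<^bsub>PGL\<^esub> \<in> pgl_centralizer A"
    using subgroup.subset[OF subgroup] by (auto simp: pgl_centralizer_def)
  ultimately show ?thesis
    using M(1,2) M(3)[OF x(1)] j unfolding lift_def
    by (rule not_connectedin_twisting_centralizer[OF invertible])
qed

end

theorem corollary4p30:
  fixes p s r :: nat and A :: "(complex^'n::finite^'n) set set"
  assumes "prime p" and "odd p"
    and "s \<ge> 1" and "p ^ s dvd CARD('n)" and "\<not> p ^ (s + 1) dvd CARD('n)"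
    and "elem_abelian_p_subgroup p r A" and "toral A"
    and "1 \<le> r" and "r \<le> s"
    and "connectedin (PGL_top :: (complex^'n^'n) set topology) (pgl_centralizer A)"
  shows "\<exists>x \<in> A. group.ord PGL x = p \<and>
           \<not> (\<exists>g \<in> carrier PGL. g \<otimes>\<^bsub>PGL\<^esub> x \<otimes>\<^bsub>PGL\<^esub> inv\<^bsub>PGL\<^esub> g = e_elt p)"
proof (rule ccontr)
  assume contra: "\<not> ?thesis"
  have p: "p > 1" "p dvd CARD('n)"
    using assms(1,3,4) prime_gt_1_nat dvd_power[of s p] dvd_trans by auto
  obtain G :: "complex^'n^'n" where G: "invertible G"
    "\<And>x. x \<in> A \<Longrightarrow> \<exists>d. (\<forall>i. d i \<noteq> 0) \<and> x = pcls (G ** diag_mat d ** matrix_inv G)"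
    using toral_diagonalizable[OF assms(7)] by blast
  have traceless: "traceless x" if x: "x \<in> A" "x \<noteq> \<one>\<^bsub>PGL\<^esub>" for x
  proof -
    obtain g where "g \<in> carrier PGL" "g \<otimes>\<^bsub>PGL\<^esub> x \<otimes>\<^bsub>PGL\<^esub> inv\<^bsub>PGL\<^esub> g = e_elt p"
      using contra x elem_abelian_p_subgroup_ord[OF assms(6,1)] by blast
    moreover have "x \<in> carrier PGL"
      using x(1) assms(6) subgroup.subset by (auto simp: elem_abelian_p_subgroup_def)
    ultimately show ?thesis
      using traceless_conj traceless_e_elt[OF p] by metis
  qed
  have "traceless_diagonalized_subgroup A G"
    using assms(6) G traceless
    by (simp add: traceless_diagonalized_subgroup_def diagonalized_subgroup_def
        traceless_diagonalized_subgroup_axioms_def elem_abelian_p_subgroup_def)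
  then interpret traceless_diagonalized_subgroup A G .
  show False
    using not_connectedin_centralizer elem_abelian_p_subgroup_nontrivial[OF assms(6,1,8)] assms(10)
    by blast
qed

end
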